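(* Let $n\ge 3$ and $\beta\in(0,1)$. Let $X,Y$ be independent random variables with $\Pr(X=i)=\Pr(Y=i)=(1-\beta)^{i-1}\beta$ for $i=1,2,\dots$, and set $L=X+Y$. Given $X,Y$, let $\pi_1,\dots,\pi_L$ be random permutations of $[n]=\{1,\dots,n\}$ such that: - $\pi_1,\dots,\pi_{L-1}$ are uniform and independent; - $\pi_L$ is uniform among the permutations with $\pi_L(i)$ odd for every $i$ with $\pi_X(i)$ even. For a player $j\in[n]$, call $j$ short if $\pi_X(j)$ is odd and long otherwise, and set $L_j=X$ if $j$ is short and $L_j=X+Y$ if $j$ is long. Fix $j\in[n]$, integers $1\le t<k$, and parities $a,b\in\{0,1\}$. Let $E$ be the event $$\{L_j=k\}\cap\{X\ge t\}\cap\{\pi_t(j)\equiv a \pmod 2\}\cap\{\pi_{t+1}(j)\equiv b\pmod 2\},$$ and assume $\Pr(E)>0$. Then $$\Pr(X=t\mid E)\le 2\beta.$$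
   Context: Interpretation: $X$ is the definitive round, and a player with input length $k$ estimates at round $t<k$ the probability that $t$ is definitive. The event $\{X\ge t\}$ is always contained in $\{L_j=k\}$ intersected with the event that the game reached round $t$. *)

theory Defs
  imports "HOL-Probability.Probability"
begin

definition uniform_perm :: "nat \<Rightarrow> (nat \<Rightarrow> nat) pmf" where
  "uniform_perm n = pmf_of_set {\<sigma>. \<sigma> permutes {1..n}}"

fun iid_list :: "nat \<Rightarrow> 'a pmf \<Rightarrow> 'a list pmf" where
  "iid_list 0 p = return_pmf []"
| "iid_list (Suc m) p = bind_pmf p (\<lambda>a. map_pmf (Cons a) (iid_list m p))"

definition last_perm :: "nat \<Rightarrow> (nat \<Rightarrow> nat) \<Rightarrow> (nat \<Rightarrow> nat) pmf" where
  "last_perm n \<tau> = pmf_of_set {\<sigma>. \<sigma> permutes {1..n} \<and> (\<forall>i\<in>{1..n}. even (\<tau> i) \<longrightarrow> odd (\<sigma> i))}"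

definition geom1 :: "real \<Rightarrow> nat pmf" where
  "geom1 \<beta> = map_pmf Suc (geometric_pmf \<beta>)"

text \<open>The joint model: outcome (x, y, ps) where ps is the list [pi_1, ..., pi_L],
  L = x + y, so pi_i = ps ! (i - 1).\<close>
definition game :: "nat \<Rightarrow> real \<Rightarrow> (nat \<times> nat \<times> (nat \<Rightarrow> nat) list) pmf" where
  "game n \<beta> =
     bind_pmf (geom1 \<beta>) (\<lambda>x.
     bind_pmf (geom1 \<beta>) (\<lambda>y.
     bind_pmf (iid_list (x + y - 1) (uniform_perm n)) (\<lambda>ps.
     map_pmf (\<lambda>\<sigma>. (x, y, ps @ [\<sigma>])) (last_perm n (ps ! (x - 1))))))"

definition perm_at :: "nat \<times> nat \<times> (nat \<Rightarrow> nat) list \<Rightarrow> nat \<Rightarrow> nat \<Rightarrow> nat" where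
  "perm_at \<omega> i = (snd (snd \<omega>)) ! (i - 1)"

definition Lj :: "nat \<Rightarrow> nat \<times> nat \<times> (nat \<Rightarrow> nat) list \<Rightarrow> nat" where
  "Lj j \<omega> = (if odd (perm_at \<omega> (fst \<omega>) j) then fst \<omega> else fst \<omega> + fst (snd \<omega>))"

definition event_E :: "nat \<Rightarrow> nat \<Rightarrow> nat \<Rightarrow> nat \<Rightarrow> nat \<Rightarrow> (nat \<times> nat \<times> (nat \<Rightarrow> nat) list) set" where
  "event_E j k t a b = {\<omega>. Lj j \<omega> = k \<and> fst \<omega> \<ge> t \<and>
      perm_at \<omega> t j mod 2 = a \<and> perm_at \<omega> (t + 1) j mod 2 = b}"

end

theory Submission
  imports Defs
begin

(* Only the case a = 0 is non-trivial: if X = t < k = L_j, then j is long,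
   so pi_t(j) = pi_X(j) is even.  Let D be the event "pi_t(j) is even and pi_(t+1)(j) has
   parity b"; when t + 1 = k the permutation pi_(t+1) is the last one, which is forced to be
   odd at j, so there D means "pi_t(j) even and b = 1".  D only concerns pi_1, ..., pi_(k-1).
   We compare the part of E with X = t, of probability at most g(t) g(k-t) Pr(D) (g the
   geometric weights), with the disjoint part of E where X = k and j is short, of probability
   at least g(k) Pr(D) Pr(pi(j) odd) >= g(k) Pr(D) / 2 by independence.  Since
   (1 - beta) g(t) g(k-t) = beta g(k), the first part is at most 2 beta / (1 - beta) times the
   second, which yields the bound 2 beta on the conditional probability. *)

subsection \<open>Discrete distributions\<close>

lemma prob_bind_pmf_single:
  assumes "\<And>x. x \<noteq> x0 \<Longrightarrow> set_pmf (N x) \<inter> A = {}"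
  shows "measure_pmf.prob (bind_pmf M N) A = pmf M x0 * measure_pmf.prob (N x0) A"
proof -
  have "emeasure (measure_pmf (bind_pmf M N)) A
      = (\<integral>\<^sup>+x. ennreal (measure_pmf.prob (N x0) A) * indicator {x0} x \<partial>measure_pmf M)"
    unfolding emeasure_bind_pmf
  proof (rule nn_integral_cong)
    fix x show "emeasure (measure_pmf (N x)) A = ennreal (measure_pmf.prob (N x0) A) * indicator {x0} x"
      using assms[of x]
      by (cases "x = x0") (auto simp: measure_pmf.emeasure_eq_measure measure_pmf_zero_iff)
  qed
  also have "\<dots> = ennreal (measure_pmf.prob (N x0) A) * emeasure (measure_pmf M) {x0}"
    by (simp add: nn_integral_cmult)
  also have "\<dots> = ennreal (pmf M x0 * measure_pmf.prob (N x0) A)"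
    by (simp add: measure_pmf.emeasure_eq_measure measure_pmf_single ennreal_mult mult.commute)
  finally show ?thesis
    by (simp add: measure_pmf.emeasure_eq_measure)
qed

lemma prob_bind_pmf_le:
  assumes "\<And>x. x \<in> set_pmf M \<Longrightarrow> \<not> C x \<Longrightarrow> measure_pmf.prob (N x) A = 0"
  shows "measure_pmf.prob (bind_pmf M N) A \<le> measure_pmf.prob M {x. C x}"
proof -
  have "emeasure (measure_pmf (bind_pmf M N)) A \<le> (\<integral>\<^sup>+x. indicator {x. C x} x \<partial>measure_pmf M)"
    unfolding emeasure_bind_pmf
  proof (rule nn_integral_mono_AE, rule AE_pmfI)
    fix x assume "x \<in> set_pmf M"
    then show "emeasure (measure_pmf (N x)) A \<le> indicator {x. C x} x"
      using assms[of x] measure_pmf.prob_le_1[of "N x" A]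
      by (cases "C x") (simp_all add: measure_pmf.emeasure_eq_measure)
  qed
  then show ?thesis
    by (simp add: measure_pmf.emeasure_eq_measure)
qed

lemma prob_bind_pmf_ge:
  assumes "0 \<le> c" and "\<And>x. x \<in> set_pmf M \<Longrightarrow> C x \<Longrightarrow> c \<le> measure_pmf.prob (N x) A"
  shows "c * measure_pmf.prob M {x. C x} \<le> measure_pmf.prob (bind_pmf M N) A"
proof -
  have "ennreal (c * measure_pmf.prob M {x. C x})
      = (\<integral>\<^sup>+x. ennreal c * indicator {x. C x} x \<partial>measure_pmf M)"
    using assms(1) by (simp add: nn_integral_cmult measure_pmf.emeasure_eq_measure ennreal_mult)
  also have "\<dots> \<le> emeasure (measure_pmf (bind_pmf M N)) A"
    unfolding emeasure_bind_pmf
  proof (rule nn_integral_mono_AE, rule AE_pmfI)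
    fix x assume "x \<in> set_pmf M"
    then show "ennreal c * indicator {x. C x} x \<le> emeasure (measure_pmf (N x)) A"
      using assms(2)[of x] by (auto simp: measure_pmf.emeasure_eq_measure indicator_def)
  qed
  finally show ?thesis
    by (simp add: measure_pmf.emeasure_eq_measure)
qed

lemma set_pmf_iid_list:
  "xs \<in> set_pmf (iid_list m p) \<Longrightarrow> length xs = m \<and> set xs \<subseteq> set_pmf p"
  by (induction m arbitrary: xs) fastforce+

lemma emeasure_iid_list_prefix_nth:
  "emeasure (measure_pmf (iid_list (m + Suc r) p)) {l. P (take m l) \<and> Q (l ! m)}
     = emeasure (measure_pmf (iid_list m p)) {xs. P xs} * emeasure (measure_pmf p) {x. Q x}"
proof (induction m arbitrary: P)
  case 0
  have "emeasure (measure_pmf (iid_list (Suc r) p)) {l. P (take 0 l) \<and> Q (l ! 0)}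
      = (\<integral>\<^sup>+a. indicator {x. P [] \<and> Q x} a \<partial>measure_pmf p)"
    unfolding add_0 iid_list.simps emeasure_bind_pmf emeasure_map_pmf
    by (intro nn_integral_cong) (auto simp: vimage_def split: split_indicator)
  then show ?case
    by (cases "P []") simp_all
next
  case (Suc m)
  have "iid_list (Suc m + Suc r) p = bind_pmf p (\<lambda>a. map_pmf (Cons a) (iid_list (m + Suc r) p))"
    by simp
  then have "emeasure (measure_pmf (iid_list (Suc m + Suc r) p)) {l. P (take (Suc m) l) \<and> Q (l ! Suc m)}
      = (\<integral>\<^sup>+a. emeasure (measure_pmf (iid_list (m + Suc r) p)) {l. P (a # take m l) \<and> Q (l ! m)} \<partial>measure_pmf p)"
    by (simp only: emeasure_bind_pmf emeasure_map_pmf) (simp add: vimage_def)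
  also have "\<dots> = (\<integral>\<^sup>+a. emeasure (measure_pmf (iid_list m p)) {xs. P (a # xs)}
                          * emeasure (measure_pmf p) {x. Q x} \<partial>measure_pmf p)"
    using Suc.IH[of "\<lambda>xs. P (_ # xs)"] by simp
  also have "\<dots> = emeasure (measure_pmf (iid_list (Suc m) p)) {xs. P xs} * emeasure (measure_pmf p) {x. Q x}"
    by (simp add: nn_integral_multc vimage_def)
  finally show ?case .
qed

lemma prob_iid_list_prefix_nth:
  "measure_pmf.prob (iid_list (m + Suc r) p) {l. P (take m l) \<and> Q (l ! m)}
     = measure_pmf.prob (iid_list m p) {xs. P xs} * measure_pmf.prob p {x. Q x}"
  using emeasure_iid_list_prefix_nth[of m r p P Q]
  by (simp add: measure_pmf.emeasure_eq_measure ennreal_mult[symmetric])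

lemma pmf_geom1:
  assumes "0 < \<beta>" "\<beta> \<le> 1" "1 \<le> i"
  shows "pmf (geom1 \<beta>) i = (1 - \<beta>) ^ (i - 1) * \<beta>"
proof -
  obtain m where "i = Suc m" using assms(3) by (cases i) auto
  then show ?thesis using assms(1,2) by (simp add: geom1_def pmf_map_inj')
qed

lemma set_pmf_geom1: "y \<in> set_pmf (geom1 \<beta>) \<Longrightarrow> 1 \<le> y"
  by (auto simp: geom1_def)

lemma geom1_split:
  assumes "0 < \<beta>" "\<beta> \<le> 1" "1 \<le> s" "1 \<le> u"
  shows "(1 - \<beta>) * (pmf (geom1 \<beta>) s * pmf (geom1 \<beta>) u) = \<beta> * pmf (geom1 \<beta>) (s + u)"
proof -
  obtain s' u' where "s = Suc s'" "u = Suc u'"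
    using assms(3,4) by (metis Suc_le_D One_nat_def)
  then show ?thesis
    using assms by (simp add: pmf_geom1 power_add algebra_simps)
qed

subsection \<open>Parities of uniform permutations\<close>

definition parity_swap :: "nat \<Rightarrow> nat \<Rightarrow> nat" where
  "parity_swap n v = (if v \<in> {1..n} then (if even v then v - 1 else if v < n then v + 1 else v) else v)"

lemma parity_swap_involution: "parity_swap n (parity_swap n v) = v"
  unfolding parity_swap_def by (auto; presburger)

lemma parity_swap_even: "v \<in> {1..n} \<Longrightarrow> even v \<Longrightarrow> odd (parity_swap n v)"
  unfolding parity_swap_def by (cases v) auto

lemma parity_swap_permutes: "parity_swap n permutes {1..n}"
  unfolding permutes_def
proof (intro conjI allI impI)
  fix x :: nat assume "x \<notin> {1..n}"
  then show "parity_swap n x = x" by (auto simp: parity_swap_def)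
next
  fix y show "\<exists>!x. parity_swap n x = y"
    by (rule ex1I[of _ "parity_swap n y"]) (metis parity_swap_involution)+
qed

lemma finite_permutations_interval: "finite {\<sigma>. \<sigma> permutes {1..(n::nat)}}"
  by (rule finite_permutations[OF finite_atLeastAtMost])

lemma set_pmf_uniform_perm: "set_pmf (uniform_perm n) = {\<sigma>. \<sigma> permutes {1..n}}"
  using finite_permutations_interval[of n] permutes_id[of "{1..n}"]
  unfolding uniform_perm_def by (intro set_pmf_of_set) (auto intro: permutes_id)

text \<open>The constraint on the last permutation is satisfiable (compose pi_X with
  parity_swap), so its distribution is supported exactly on the admissible permutations.\<close>
lemma set_pmf_last_perm:
  assumes "\<tau> permutes {1..n}"
  shows "set_pmf (last_perm n \<tau>) = {\<sigma>. \<sigma> permutes {1..n} \<and> (\<forall>i\<in>{1..n}. even (\<tau> i) \<longrightarrow> odd (\<sigma> i))}"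
  unfolding last_perm_def
proof (rule set_pmf_of_set)
  show "finite {\<sigma>. \<sigma> permutes {1..n} \<and> (\<forall>i\<in>{1..n}. even (\<tau> i) \<longrightarrow> odd (\<sigma> i))}"
    by (rule finite_subset[OF _ finite_permutations_interval]) auto
  have "parity_swap n \<circ> \<tau> permutes {1..n}"
    by (intro permutes_compose assms parity_swap_permutes)
  moreover have "\<forall>i\<in>{1..n}. even (\<tau> i) \<longrightarrow> odd ((parity_swap n \<circ> \<tau>) i)"
    using parity_swap_even permutes_in_image[OF assms] by auto
  ultimately show "{\<sigma>. \<sigma> permutes {1..n} \<and> (\<forall>i\<in>{1..n}. even (\<tau> i) \<longrightarrow> odd (\<sigma> i))} \<noteq> {}"
    by blast
qed

text \<open>A uniform permutation sends a fixed point to an odd number with probability at least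
  1/2: composing with parity_swap injects the even outcomes into the odd ones.\<close>
lemma prob_uniform_perm_odd:
  assumes "j \<in> {1..n}"
  shows "1 / 2 \<le> measure_pmf.prob (uniform_perm n) {\<sigma>. odd (\<sigma> j)}"
proof -
  define P where "P = {\<sigma>. \<sigma> permutes {1..n}}"
  define Ev where "Ev = P \<inter> {\<sigma>. even (\<sigma> j)}"
  define Od where "Od = P \<inter> {\<sigma>. odd (\<sigma> j)}"
  have fin: "finite P" unfolding P_def by (rule finite_permutations_interval)
  have "P = Ev \<union> Od" "Ev \<inter> Od = {}"
    unfolding Ev_def Od_def by auto
  then have card_split: "card P = card Ev + card Od"
    using fin by (simp add: card_Un_disjoint)
  have "card Ev \<le> card Od"
  proof (rule card_inj_on_le)
    show "inj_on ((\<circ>) (parity_swap n)) Ev"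
      by (rule inj_onI) (simp add: fun_eq_iff, metis parity_swap_involution)
    show "(\<circ>) (parity_swap n) ` Ev \<subseteq> Od"
      unfolding Ev_def Od_def P_def using assms parity_swap_even parity_swap_permutes[of n]
      by (auto intro!: permutes_compose dest: permutes_in_image[where x = j])
    show "finite Od" unfolding Od_def using fin by simp
  qed
  then have card_le: "real (card P) \<le> 2 * real (card Od)"
    using card_split by linarith
  have "0 < card P"
    using fin unfolding P_def by (auto simp: card_gt_0_iff intro: permutes_id)
  then have "1 / 2 \<le> real (card Od) / real (card P)"
    using card_le by (simp add: pos_le_divide_eq)
  moreover have "measure_pmf.prob (uniform_perm n) {\<sigma>. odd (\<sigma> j)} = card Od / card P"
    using finite_permutations_interval[of n] permutes_id[of "{1..n}"]
    unfolding uniform_perm_def Od_def P_def by (subst measure_pmf_of_set) (auto intro: permutes_id)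
  ultimately show ?thesis
    by linarith
qed

definition game_given :: "nat \<Rightarrow> nat \<Rightarrow> nat \<Rightarrow> (nat \<times> nat \<times> (nat \<Rightarrow> nat) list) pmf" where
  "game_given n x y = bind_pmf (iid_list (x + y - 1) (uniform_perm n)) (\<lambda>ps.
     map_pmf (\<lambda>\<sigma>. (x, y, ps @ [\<sigma>])) (last_perm n (ps ! (x - 1))))"

lemma game_decomp:
  "game n \<beta> = bind_pmf (geom1 \<beta>) (\<lambda>x. bind_pmf (geom1 \<beta>) (\<lambda>y. game_given n x y))"
  by (simp add: game_def game_given_def)

lemma set_pmf_game_given: "\<omega> \<in> set_pmf (game_given n x y) \<Longrightarrow> fst \<omega> = x \<and> fst (snd \<omega>) = y"
  by (auto simp: game_given_def)

subsection \<open>The two parts of the event E\<close>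

text \<open>The parity pattern D of pi_t(j), pi_(t+1)(j) seen from the first k - 1 permutations:
  pi_t(j) is even and pi_(t+1)(j) has parity b; when t + 1 = k and pi_t = pi_X, the
  permutation pi_(t+1) is the last one and is odd at j, so the pattern requires b = 1.\<close>
definition early_parities :: "nat \<Rightarrow> nat \<Rightarrow> nat \<Rightarrow> nat \<Rightarrow> (nat \<Rightarrow> nat) list \<Rightarrow> bool" where
  "early_parities j t k b ps \<longleftrightarrow>
     even ((ps ! (t - 1)) j) \<and> (if t + 1 < k then (ps ! t) j mod 2 = b else b = 1)"

lemma early_parities_take:
  assumes "1 \<le> t" "t < k"
  shows "early_parities j t k b (take (k - 1) ps) = early_parities j t k b ps"
  using assms by (simp add: early_parities_def)

text \<open>Given X = t and Y = k - t (the only way to have X = t and L_j = k), E forces D.\<close>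
lemma prob_given_long_at_t_le:
  assumes "j \<in> {1..n}" "1 \<le> t" "t < k"
  shows "measure_pmf.prob (game_given n t (k - t)) ({\<omega>. fst \<omega> = t} \<inter> event_E j k t a b)
           \<le> measure_pmf.prob (iid_list (k - 1) (uniform_perm n)) {ps. early_parities j t k b ps}"
proof -
  have length_eq: "t + (k - t) - 1 = k - 1" using assms by simp
  show ?thesis
    unfolding game_given_def length_eq
  proof (rule prob_bind_pmf_le)
    fix ps assume ps: "ps \<in> set_pmf (iid_list (k - 1) (uniform_perm n))"
      and not_D: "\<not> early_parities j t k b ps"
    have len: "length ps = k - 1" and "set ps \<subseteq> {\<sigma>. \<sigma> permutes {1..n}}"
      using set_pmf_iid_list[OF ps] by (auto simp: set_pmf_uniform_perm)
    moreover have "ps ! (t - 1) \<in> set ps" using len assms by simp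
    ultimately have "ps ! (t - 1) permutes {1..n}" by blast
    have "(t, k - t, ps @ [\<sigma>]) \<notin> {\<omega>. fst \<omega> = t} \<inter> event_E j k t a b"
      if \<sigma>: "\<sigma> \<in> set_pmf (last_perm n (ps ! (t - 1)))" for \<sigma>
    proof
      assume "(t, k - t, ps @ [\<sigma>]) \<in> {\<omega>. fst \<omega> = t} \<inter> event_E j k t a b"
      then have "even ((ps ! (t - 1)) j)"
        and "(if t + 1 < k then ps ! t else \<sigma>) j mod 2 = b"
        using len assms(2,3) by (auto simp: event_E_def Lj_def perm_at_def nth_append split: if_splits)
      moreover have "even ((ps ! (t - 1)) j) \<longrightarrow> odd (\<sigma> j)"
        using \<sigma> assms(1) set_pmf_last_perm[OF \<open>ps ! (t - 1) permutes {1..n}\<close>] by blast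
      ultimately show False
        using not_D by (auto simp: early_parities_def split: if_splits)
    qed
    then show "measure_pmf.prob (map_pmf (\<lambda>\<sigma>. (t, k - t, ps @ [\<sigma>])) (last_perm n (ps ! (t - 1))))
                 ({\<omega>. fst \<omega> = t} \<inter> event_E j k t a b) = 0"
      by (auto simp: measure_pmf_zero_iff)
  qed
qed

lemma prob_long_at_t_le:
  assumes "j \<in> {1..n}" "1 \<le> t" "t < k"
  shows "measure_pmf.prob (game n \<beta>) ({\<omega>. fst \<omega> = t} \<inter> event_E j k t a b)
           \<le> pmf (geom1 \<beta>) t * pmf (geom1 \<beta>) (k - t)
             * measure_pmf.prob (iid_list (k - 1) (uniform_perm n)) {ps. early_parities j t k b ps}"
proof -
  let ?A = "{\<omega>. fst \<omega> = t} \<inter> event_E j k t a b"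
  have "measure_pmf.prob (game n \<beta>) ?A
      = pmf (geom1 \<beta>) t * measure_pmf.prob (bind_pmf (geom1 \<beta>) (game_given n t)) ?A"
    unfolding game_decomp by (rule prob_bind_pmf_single) (auto dest!: set_pmf_game_given)
  also have "measure_pmf.prob (bind_pmf (geom1 \<beta>) (game_given n t)) ?A
      = pmf (geom1 \<beta>) (k - t) * measure_pmf.prob (game_given n t (k - t)) ?A"
    \<comment> \<open>on X = t, the condition L_j = k > t forces j to be long and Y = k - t\<close>
    by (rule prob_bind_pmf_single)
      (use assms(3) in \<open>auto simp: event_E_def Lj_def dest!: set_pmf_game_given split: if_splits\<close>)
  finally show ?thesis
    using prob_given_long_at_t_le[OF assms, of a b] by (simp add: mult.assoc mult_left_mono)
qed

text \<open>The part of E with X = k and j short: given X = k and any Y, it contains the event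
  "D and pi_k(j) odd", whose probability factorises by independence.\<close>
lemma prob_short_at_k_ge:
  assumes "1 \<le> t" "t < k"
  shows "pmf (geom1 \<beta>) k * measure_pmf.prob (iid_list (k - 1) (uniform_perm n)) {ps. early_parities j t k b ps}
           * measure_pmf.prob (uniform_perm n) {\<sigma>. odd (\<sigma> j)}
         \<le> measure_pmf.prob (game n \<beta>) {\<omega>. fst \<omega> = k \<and> odd (perm_at \<omega> k j)
              \<and> perm_at \<omega> t j mod 2 = 0 \<and> perm_at \<omega> (t + 1) j mod 2 = b}"
    (is "pmf _ k * ?q * ?\<rho> \<le> measure_pmf.prob _ ?B")
proof -
  have given: "?q * ?\<rho> \<le> measure_pmf.prob (game_given n k y) ?B" if "1 \<le> y" for y
  proof -
    let ?C = "\<lambda>ps. early_parities j t k b (take (k - 1) ps) \<and> odd ((ps ! (k - 1)) j)"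
    have length_eq: "k + y - 1 = (k - 1) + Suc (y - 1)" using that assms(2) by simp
    have factorise: "measure_pmf.prob (iid_list (k + y - 1) (uniform_perm n)) {ps. ?C ps} = ?q * ?\<rho>"
      unfolding length_eq
      by (rule prob_iid_list_prefix_nth[of "k - 1" "y - 1" _ "early_parities j t k b" "\<lambda>\<sigma>. odd (\<sigma> j)"])
    have "1 * measure_pmf.prob (iid_list (k + y - 1) (uniform_perm n)) {ps. ?C ps}
        \<le> measure_pmf.prob (game_given n k y) ?B"
      unfolding game_given_def
    proof (rule prob_bind_pmf_ge)
      fix ps assume ps: "ps \<in> set_pmf (iid_list (k + y - 1) (uniform_perm n))" and C: "?C ps"
      have perm: "perm_at (k, y, ps @ [\<sigma>]) i = ps ! (i - 1)" if "1 \<le> i" "i \<le> k" for i \<sigma>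
      proof -
        have "i - 1 < length ps" using set_pmf_iid_list[OF ps] that \<open>1 \<le> y\<close> by linarith
        then show ?thesis by (simp add: perm_at_def nth_append)
      qed
      have D: "early_parities j t k b ps"
        using C early_parities_take[OF assms(1,2)] by simp
      have "(ps ! t) j mod 2 = b"
      proof (cases "t + 1 < k")
        case True
        then show ?thesis using D by (simp add: early_parities_def)
      next
        case False
        then have "t = k - 1" "b = 1" using D assms(2) by (auto simp: early_parities_def)
        then show ?thesis using C by (simp add: odd_iff_mod_2_eq_one)
      qed
      then have "(k, y, ps @ [\<sigma>]) \<in> ?B" for \<sigma>
        using C D assms(1,2) by (simp add: perm early_parities_def)
      then show "1 \<le> measure_pmf.prob (map_pmf (\<lambda>\<sigma>. (k, y, ps @ [\<sigma>])) (last_perm n (ps ! (k - 1)))) ?B"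
        by simp
    qed simp
    then show ?thesis
      unfolding factorise by simp
  qed
  have "pmf (geom1 \<beta>) k * (?q * ?\<rho> * measure_pmf.prob (geom1 \<beta>) {y. True})
      \<le> pmf (geom1 \<beta>) k * measure_pmf.prob (bind_pmf (geom1 \<beta>) (game_given n k)) ?B"
    using given set_pmf_geom1
    by (intro mult_left_mono prob_bind_pmf_ge) (auto simp: measure_nonneg)
  also have "\<dots> = measure_pmf.prob (game n \<beta>) ?B"
    unfolding game_decomp
    by (rule prob_bind_pmf_single[symmetric]) (auto dest!: set_pmf_game_given)
  finally show ?thesis by simp
qed

lemma ratio_le_two_beta:
  fixes \<beta> P1 P2 PE :: real
  assumes "0 < \<beta>" "(1 - \<beta>) * P1 \<le> 2 * \<beta> * P2" "0 \<le> P1" "P1 + P2 \<le> PE" "0 < PE"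
  shows "P1 / PE \<le> 2 * \<beta>"
proof -
  have "P1 \<le> 2 * \<beta> * P2 + \<beta> * P1"
    using assms(2) by (simp add: algebra_simps)
  also have "\<dots> \<le> 2 * \<beta> * P2 + 2 * \<beta> * P1"
    using assms(1,3) by simp
  also have "\<dots> \<le> 2 * \<beta> * PE"
    using assms(1,4) by (simp add: distrib_left[symmetric])
  finally show ?thesis
    using assms(5) by (simp add: divide_simps mult.commute)
qed

lemma prob_long_vs_short:
  assumes "j \<in> {1..n}" "1 \<le> t" "t < k" "0 < \<beta>" "\<beta> < 1"
  shows "(1 - \<beta>) * measure_pmf.prob (game n \<beta>) ({\<omega>. fst \<omega> = t} \<inter> event_E j k t a b)
           \<le> 2 * \<beta> * measure_pmf.prob (game n \<beta>) {\<omega>. fst \<omega> = k \<and> odd (perm_at \<omega> k j)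
                 \<and> perm_at \<omega> t j mod 2 = 0 \<and> perm_at \<omega> (t + 1) j mod 2 = b}"
    (is "_ \<le> 2 * \<beta> * measure_pmf.prob _ ?B")
proof -
  let ?g = "pmf (geom1 \<beta>)"
  let ?q = "measure_pmf.prob (iid_list (k - 1) (uniform_perm n)) {ps. early_parities j t k b ps}"
  let ?\<rho> = "measure_pmf.prob (uniform_perm n) {\<sigma>. odd (\<sigma> j)}"
  have "(1 - \<beta>) * measure_pmf.prob (game n \<beta>) ({\<omega>. fst \<omega> = t} \<inter> event_E j k t a b)
      \<le> (1 - \<beta>) * (?g t * ?g (k - t)) * ?q"
    using prob_long_at_t_le[OF assms(1-3), of \<beta> a b] assms(5) by (simp add: mult.assoc)
  also have "\<dots> = \<beta> * ?g k * ?q"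
    using geom1_split[of \<beta> t "k - t"] assms(2-5) by simp
  also have "\<dots> \<le> \<beta> * ?g k * ?q * (2 * ?\<rho>)"
    using prob_uniform_perm_odd[OF assms(1)] assms(4) mult_left_mono[of 1 "2 * ?\<rho>" "\<beta> * ?g k * ?q"]
    by (simp add: measure_nonneg)
  also have "\<dots> = 2 * \<beta> * (?g k * ?q * ?\<rho>)"
    by (simp add: algebra_simps)
  also have "\<dots> \<le> 2 * \<beta> * measure_pmf.prob (game n \<beta>) ?B"
    using prob_short_at_k_ge[OF assms(2,3), where \<beta> = \<beta> and n = n and j = j and b = b] assms(4)
    by (simp add: mult.assoc)
  finally show ?thesis .
qed

theorem lemma3:
  fixes n j k t a b :: nat and \<beta> :: real
  assumes "n \<ge> 3" and "0 < \<beta>" and "\<beta> < 1"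
    and "j \<in> {1..n}" and "1 \<le> t" and "t < k"
    and "a \<in> {0, 1}" and "b \<in> {0, 1}"
    and "measure_pmf.prob (game n \<beta>) (event_E j k t a b) > 0"
  shows "measure_pmf.prob (game n \<beta>) ({\<omega>. fst \<omega> = t} \<inter> event_E j k t a b)
           / measure_pmf.prob (game n \<beta>) (event_E j k t a b) \<le> 2 * \<beta>"
proof (cases "a = 0")
  case False
  \<comment> \<open>X = t < k = L_j makes j long, i.e. pi_t(j) even, which excludes a = 1\<close>
  then have "{\<omega>. fst \<omega> = t} \<inter> event_E j k t a b = {}"
    using assms(6,7) by (auto simp: event_E_def Lj_def split: if_splits)
  then show ?thesis
    using assms(2) by simp
next
  case True
  let ?A = "{\<omega>. fst \<omega> = t} \<inter> event_E j k t a b"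
  let ?B = "{\<omega>. fst \<omega> = k \<and> odd (perm_at \<omega> k j) \<and> perm_at \<omega> t j mod 2 = 0
              \<and> perm_at \<omega> (t + 1) j mod 2 = b}"
  have "?A \<inter> ?B = {}"
    using assms(6) by auto
  then have "measure_pmf.prob (game n \<beta>) ?A + measure_pmf.prob (game n \<beta>) ?B
      = measure_pmf.prob (game n \<beta>) (?A \<union> ?B)"
    by (simp add: measure_pmf.finite_measure_Union)
  also have "\<dots> \<le> measure_pmf.prob (game n \<beta>) (event_E j k t a b)"
    \<comment> \<open>on ?B the player j is short, so L_j = X = k\<close>
    using True assms(6) by (intro measure_pmf.finite_measure_mono) (auto simp: event_E_def Lj_def)
  finally show ?thesis
    using ratio_le_two_beta[OF assms(2) prob_long_vs_short[OF assms(4-6,2,3)] measure_nonneg _ assms(9)]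
    by simp
qed

end
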